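(* Let $X_0, X_1, \dots$ be positive, independent, identically distributed random variables with $E X_i = \mu_X > 0$, and let $L_1, L_2, \dots$ be positive, independent, identically distributed random variables with $E L_i = \mu_L < \infty$. Let $l_0 > 0$ be a constant. Consider the following stochastic "ant on a rubber rope" process. Initially the rope has length $R_0 = l_0$ and the ant is at the left endpoint, at position $p_0 = 0$. For each second $i = 1, 2, \dots$: first the ant moves forward along the rope by $X_{i-1}$ units, reaching position $p_{i-1} + X_{i-1}$; if $p_{i-1} + X_{i-1} \geq R_{i-1}$, the ant has reached the right endpoint of the rope at second $i$. Otherwise, at the end of second $i$ the rope stretches uniformly and instantly by $L_i$ units to length $R_i = R_{i-1} + L_i$, and the ant (carried along by the uniform stretching) is at position $p_i = (p_{i-1} + X_{i-1}) \cdot \frac{R_i}{R_{i-1}}$. Then, almost surely, the ant reaches the right endpoint of the rope at some finite second.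
   Context: Uniform stretching of the rope means that every point of the rope is scaled by the same factor, so the ratio of the ant's position to the rope's length is unchanged by a stretch. *)

theory Defs
  imports "HOL-Probability.Probability"
begin

definition rope_len :: "real \<Rightarrow> (nat \<Rightarrow> 'a \<Rightarrow> real) \<Rightarrow> nat \<Rightarrow> 'a \<Rightarrow> real" where
  "rope_len l0 L n \<omega> = l0 + (\<Sum>i\<in>{1..n}. L i \<omega>)"

text \<open>Ant position p_n: p_0 = 0, p_(i+1) = (p_i + X_i) * R_(i+1) / R_i.
  (After the ant has reached the endpoint, the values are irrelevant.)\<close>
primrec ant_pos :: "real \<Rightarrow> (nat \<Rightarrow> 'a \<Rightarrow> real) \<Rightarrow> (nat \<Rightarrow> 'a \<Rightarrow> real) \<Rightarrow> nat \<Rightarrow> 'a \<Rightarrow> real" where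
  "ant_pos l0 X L 0 \<omega> = 0"
| "ant_pos l0 X L (Suc i) \<omega> =
     (ant_pos l0 X L i \<omega> + X i \<omega>) * (rope_len l0 L (Suc i) \<omega> / rope_len l0 L i \<omega>)"

end

theory Submission
  imports Defs "HOL-Real_Asymp.Real_Asymp"
begin

(* Unrolling the recursion gives p_i = R_i * (SUM k<i. X_k / R_k), so the ant arrives as soon
   as the series SUM X_k / R_k reaches 1, and it suffices that this series diverges almost surely.
   Fix e > 0 and look at the dyadic blocks [2^j, 2^(j+1)). Hoeffding's inequality for the bounded
   i.i.d. variables min X_k 1 shows that their block sum exceeds c 2^j with probability tending
   to 1, and Markov's inequality with E R_n <= l0 + n mu_L gives R_(2^(j+1)) < K 2^j with
   probability at least 1 - e/2 for a suitable K. On both events the block contributes at least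
   c/K to the series, so with probability at least 1 - e infinitely many blocks do and the series
   diverges. *)

lemma rope_len_ge:
  assumes "\<And>i. i \<ge> 1 \<Longrightarrow> L i \<omega> \<ge> 0"
  shows "rope_len l0 L n \<omega> \<ge> l0"
  unfolding rope_len_def using assms by (auto intro: sum_nonneg)

lemma rope_len_mono:
  assumes "\<And>i. i \<ge> 1 \<Longrightarrow> L i \<omega> \<ge> 0" and "k \<le> n"
  shows "rope_len l0 L k \<omega> \<le> rope_len l0 L n \<omega>"
  unfolding rope_len_def using assms by (intro add_left_mono sum_mono2) auto

lemma ant_pos_eq:
  assumes "\<And>k. k < i \<Longrightarrow> rope_len l0 L k \<omega> \<noteq> 0"
  shows "ant_pos l0 X L i \<omega> = rope_len l0 L i \<omega> * (\<Sum>k<i. X k \<omega> / rope_len l0 L k \<omega>)"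
  using assms by (induction i) (simp_all add: field_simps)

lemma ant_reaches_end_if_sum_ge_1:
  assumes "\<And>k. rope_len l0 L k \<omega> > 0"
    and "1 \<le> (\<Sum>k<n. X k \<omega> / rope_len l0 L k \<omega>)"
  shows "\<exists>i. ant_pos l0 X L i \<omega> + X i \<omega> \<ge> rope_len l0 L i \<omega>"
proof -
  obtain i where n: "n = Suc i"
    using assms(2) by (cases n) auto
  have "rope_len l0 L k \<omega> \<noteq> 0" for k
    using assms(1)[of k] by simp
  then have "ant_pos l0 X L i \<omega> + X i \<omega>
               = rope_len l0 L i \<omega> * (\<Sum>k<n. X k \<omega> / rope_len l0 L k \<omega>)"
    by (simp add: n ant_pos_eq field_simps)
  also have "\<dots> \<ge> rope_len l0 L i \<omega>"
    using assms by simp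
  finally show ?thesis by blast
qed

lemma not_summable_if_frequently_dyadic_block_ge:
  fixes a :: "nat \<Rightarrow> real"
  assumes "c > 0" and "\<exists>\<^sub>F j in sequentially. c \<le> (\<Sum>k\<in>{2^j..<2^Suc j}. a k)"
  shows "\<not> summable a"
proof
  assume "summable a"
  then obtain N where N: "\<And>m n. m \<ge> N \<Longrightarrow> \<bar>\<Sum>k\<in>{m..<n}. a k\<bar> < c"
    using \<open>c > 0\<close> unfolding summable_Cauchy by (metis real_norm_def)
  obtain j where "j \<ge> N" and "c \<le> (\<Sum>k\<in>{2^j..<2^Suc j}. a k)"
    using assms(2) unfolding frequently_sequentially by auto
  moreover have "2^j \<ge> N"
    using \<open>j \<ge> N\<close> less_exp[of j] by linarith
  ultimately show False
    using N[of "2^j" "2^Suc j"] by linarith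
qed

lemma partial_sum_ge_if_not_summable:
  fixes a :: "nat \<Rightarrow> real"
  assumes "\<And>k. a k \<ge> 0" and "\<not> summable a"
  shows "\<exists>n. B \<le> (\<Sum>k<n. a k)"
  using assms summableI_nonneg_bounded[of a B] by (meson linorder_not_le order_less_imp_le)

lemma sum_ratio_ge:
  fixes x y r :: "nat \<Rightarrow> real"
  assumes "\<And>k. k \<in> I \<Longrightarrow> 0 \<le> y k \<and> y k \<le> x k \<and> 0 < r k \<and> r k \<le> N"
    and "n * s < (\<Sum>k\<in>I. y k)" and "0 < N" and "N < K * n" and "K > 0" and "n > 0"
  shows "s / K \<le> (\<Sum>k\<in>I. x k / r k)"
proof -
  have "s / K = n * s / (K * n)"
    using assms by simp
  also have "\<dots> \<le> (\<Sum>k\<in>I. y k) / (K * n)"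
    using assms by (intro divide_right_mono) auto
  also have "\<dots> \<le> (\<Sum>k\<in>I. y k) / N"
    using assms by (intro divide_left_mono sum_nonneg) auto
  also have "\<dots> = (\<Sum>k\<in>I. y k / N)"
    by (simp add: sum_divide_distrib)
  also have "\<dots> \<le> (\<Sum>k\<in>I. x k / r k)"
    using assms by (intro sum_mono frac_le) (auto intro: order_trans)
  finally show ?thesis .
qed

lemma
  fixes f g :: "'a \<Rightarrow> real"
  assumes "f \<in> borel_measurable M" "g \<in> borel_measurable M" "distr M borel f = distr M borel g"
  shows integrable_iff_distr_eq: "integrable M f \<longleftrightarrow> integrable M g"
    and integral_eq_if_distr_eq: "integral\<^sup>L M f = integral\<^sup>L M g"
  using integrable_distr_eq[of f M borel "\<lambda>x. x"] integrable_distr_eq[of g M borel "\<lambda>x. x"]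
    integral_distr[of f M borel "\<lambda>x. x"] integral_distr[of g M borel "\<lambda>x. x"] assms
  by simp_all

lemma (in prob_space) prob_limsup_ge:
  assumes "\<And>j. G j \<in> events" and "eventually (\<lambda>j. p \<le> prob (G j)) sequentially"
  shows "p \<le> prob (limsup G)"
proof -
  define U where "U N = (\<Union>j\<in>{N..}. G j)" for N
  obtain J where J: "\<And>j. j \<ge> J \<Longrightarrow> p \<le> prob (G j)"
    using assms(2) unfolding eventually_sequentially by auto
  have "p \<le> prob (U N)" for N
  proof -
    have "prob (G (max N J)) \<le> prob (U N)"
      using assms(1) unfolding U_def
      by (intro finite_measure_mono) (auto intro!: bexI[of _ "max N J"])
    then show ?thesis
      using J[of "max N J"] by simp
  qed
  moreover have "(\<lambda>N. prob (U N)) \<longlonglongrightarrow> prob (\<Inter>N. U N)"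
    using assms(1) unfolding U_def
    by (intro finite_Lim_measure_decseq) (auto simp: decseq_def intro: le_trans)
  moreover have "limsup G = (\<Inter>N. U N)"
    unfolding limsup_INF_SUP U_def by simp
  ultimately show ?thesis
    by (auto intro: LIMSEQ_le_const)
qed

lemma (in prob_space) AE_I_events_prob_ge:
  assumes "\<And>\<epsilon>. \<epsilon> > 0 \<Longrightarrow> \<exists>A\<in>events. 1 - \<epsilon> \<le> prob A \<and> (\<forall>\<omega>\<in>A. P \<omega>)"
  shows "AE \<omega> in M. P \<omega>"
proof -
  have "\<forall>n. \<exists>A. A \<in> events \<and> 1 - 1 / Suc n \<le> prob A \<and> (\<forall>\<omega>\<in>A. P \<omega>)"
  proof
    fix n :: nat
    show "\<exists>A. A \<in> events \<and> 1 - 1 / Suc n \<le> prob A \<and> (\<forall>\<omega>\<in>A. P \<omega>)"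
      using assms[of "1 / Suc n"] by auto
  qed
  then obtain A where A: "\<And>n. A n \<in> events" "\<And>n. 1 - 1 / Suc n \<le> prob (A n)" "\<And>n. \<forall>\<omega>\<in>A n. P \<omega>"
    by (auto dest!: choice)
  have "1 \<le> prob (\<Union>n. A n)"
  proof (rule field_le_epsilon)
    fix e :: real assume "e > 0"
    then obtain n where "1 / Suc n < e"
      using nat_approx_posE by blast
    moreover have "prob (A n) \<le> prob (\<Union>n. A n)"
      using A(1) by (intro finite_measure_mono) auto
    ultimately show "1 \<le> prob (\<Union>n. A n) + e"
      using A(2)[of n] by linarith
  qed
  then have "AE \<omega> in M. \<omega> \<in> (\<Union>n. A n)"
    using A(1) by (subst prob_eq_1[symmetric]) (auto intro: antisym)
  then show ?thesis
    using A(3) by (auto elim: eventually_mono)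
qed

lemma (in prob_space) prob_mean_le_half_expectation:
  assumes "indep_vars (\<lambda>_. borel) Y UNIV" and "\<And>i. distr M borel (Y i) = distr M borel (Y 0)"
    and "AE \<omega> in M. Y 0 \<omega> \<in> {0..1}" and "finite I" and "I \<noteq> {}"
  shows "prob {\<omega>\<in>space M. (\<Sum>k\<in>I. Y k \<omega>) / card I \<le> expectation (Y 0) / 2}
           \<le> exp (-2 * card I * (expectation (Y 0) / 2)\<^sup>2)"
proof -
  interpret Hoeffding_ineq_iid M I Y "Y 0" 0 1 "expectation (Y 0)"
  proof unfold_locales
    show "indep_vars (\<lambda>_. borel) Y I"
      using assms(1) by (rule indep_vars_subset) simp
    show "random_variable borel (Y 0)"
      using assms(1) unfolding indep_vars_def by simp
  qed (use assms in simp_all)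
  have "expectation (Y 0) \<ge> 0"
    using assms(3) by (intro integral_nonneg_AE) auto
  then show ?thesis
    using Hoeffding_ineq_le'[of "expectation (Y 0) / 2"] assms by simp
qed

locale rubber_rope = prob_space +
  fixes X L :: "nat \<Rightarrow> 'a \<Rightarrow> real" and l0 \<mu>L :: real
  assumes X_pos: "\<And>i \<omega>. \<omega> \<in> space M \<Longrightarrow> X i \<omega> > 0"
    and X_indep: "indep_vars (\<lambda>_. borel) X UNIV"
    and X_id: "\<And>i. distr M borel (X i) = distr M borel (X 0)"
    and L_nonneg: "\<And>i \<omega>. i \<ge> 1 \<Longrightarrow> \<omega> \<in> space M \<Longrightarrow> L i \<omega> \<ge> 0"
    and L_integrable: "\<And>i. i \<ge> 1 \<Longrightarrow> integrable M (L i)"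
    and L_expectation_le: "\<And>i. i \<ge> 1 \<Longrightarrow> expectation (L i) \<le> \<mu>L"
    and l0_pos: "l0 > 0"
begin

lemma X_measurable [measurable]: "X i \<in> borel_measurable M"
  using X_indep unfolding indep_vars_def by auto

lemma rope_len_pos: "\<omega> \<in> space M \<Longrightarrow> rope_len l0 L n \<omega> > 0"
  using rope_len_ge[of L \<omega> l0 n] L_nonneg l0_pos by force

lemma integrable_rope_len: "integrable M (rope_len l0 L n)"
  unfolding rope_len_def[abs_def] using L_integrable
  by (auto intro!: Bochner_Integration.integrable_add Bochner_Integration.integrable_sum)

lemma rope_len_measurable [measurable]: "rope_len l0 L n \<in> borel_measurable M"
  using integrable_rope_len by (rule borel_measurable_integrable)

lemma expectation_rope_len_le: "expectation (rope_len l0 L n) \<le> l0 + n * \<mu>L"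
proof -
  have "expectation (rope_len l0 L n) = l0 + (\<Sum>i\<in>{1..n}. expectation (L i))"
    unfolding rope_len_def[abs_def] using L_integrable
    by (subst Bochner_Integration.integral_add)
       (auto intro!: Bochner_Integration.integrable_sum simp: integral_sum prob_space)
  also have "\<dots> \<le> l0 + (\<Sum>i\<in>{1..n}. \<mu>L)"
    using L_expectation_le by (intro add_left_mono sum_mono) auto
  finally show ?thesis by simp
qed

lemma prob_rope_len_dyadic_ge:
  assumes "K > 0"
  shows "prob {\<omega>\<in>space M. K * 2^j \<le> rope_len l0 L (2^Suc j) \<omega>} \<le> (l0 + 2 * \<mu>L) / K"
proof -
  have "prob {\<omega>\<in>space M. K * 2^j \<le> rope_len l0 L (2^Suc j) \<omega>}
          \<le> expectation (rope_len l0 L (2^Suc j)) / (K * 2^j)"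
    using assms rope_len_pos
    by (intro integral_Markov_inequality_measure[where A="space M"] integrable_rope_len)
       (auto intro!: AE_I2 less_imp_le)
  also have "\<dots> \<le> (l0 + 2^Suc j * \<mu>L) / (K * 2^j)"
    using assms expectation_rope_len_le[of "2^Suc j"] by (intro divide_right_mono) auto
  also have "\<dots> \<le> (l0 + 2 * \<mu>L) * 2^j / (K * 2^j)"
    using assms l0_pos by (intro divide_right_mono) (auto simp: algebra_simps)
  finally show ?thesis
    by simp
qed

lemma capped_dyadic_block_sum_large:
  "\<exists>c>0. (\<lambda>j. prob {\<omega>\<in>space M. (\<Sum>k\<in>{2^j..<2^Suc j}. min (X k \<omega>) 1) \<le> 2^j * c}) \<longlonglongrightarrow> 0"
proof -
  define Y where "Y = (\<lambda>k \<omega>. min (X k \<omega>) 1)"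
  have Y_measurable [measurable]: "Y k \<in> borel_measurable M" for k
    unfolding Y_def by measurable
  have Y_indep: "indep_vars (\<lambda>_. borel) Y UNIV"
    unfolding Y_def using indep_vars_compose2[OF X_indep, where Y="\<lambda>_ x. min x 1"] by simp
  have "distr M borel (Y k) = distr (distr M borel (X k)) borel (\<lambda>x. min x 1)" for k
    by (subst distr_distr) (auto simp: comp_def Y_def)
  then have Y_id: "distr M borel (Y k) = distr M borel (Y 0)" for k
    by (metis X_id)
  have Y_bounded: "AE \<omega> in M. Y 0 \<omega> \<in> {0..1}"
    by (intro AE_I2) (auto simp: Y_def X_pos less_imp_le)
  define c where "c = expectation (Y 0) / 2"
  have "integrable M (Y 0)"
    using Y_bounded by (intro integrable_const_bound[where B=1]) auto
  then have "0 < expectation (Y 0)"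
    using integral_less_AE_space[of "\<lambda>_. 0" "Y 0"] by (simp add: Y_def X_pos emeasure_space_1)
  then have "c > 0"
    by (simp add: c_def)
  have Hoeffding: "prob {\<omega>\<in>space M. (\<Sum>k\<in>{2^j..<2^Suc j}. Y k \<omega>) \<le> 2^j * c}
                     \<le> exp (-2 * 2^j * c\<^sup>2)" for j
  proof -
    have card: "card {2^j..<(2::nat)^Suc j} = 2^j"
      by simp
    have "{\<omega>\<in>space M. (\<Sum>k\<in>{2^j..<2^Suc j}. Y k \<omega>) \<le> 2^j * c}
          = {\<omega>\<in>space M. (\<Sum>k\<in>{2^j..<2^Suc j}. Y k \<omega>) / card {2^j..<(2::nat)^Suc j}
                           \<le> expectation (Y 0) / 2}"
      unfolding card c_def by (auto simp: divide_le_eq mult.commute)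
    then show ?thesis
      using prob_mean_le_half_expectation[OF Y_indep Y_id Y_bounded, of "{2^j..<2^Suc j}"]
      unfolding card c_def by simp
  qed
  have exp_lim: "(\<lambda>j. exp (-2 * 2^j * c\<^sup>2)) \<longlonglongrightarrow> 0"
    using \<open>c > 0\<close> by real_asymp
  have "(\<lambda>j. prob {\<omega>\<in>space M. (\<Sum>k\<in>{2^j..<2^Suc j}. Y k \<omega>) \<le> 2^j * c}) \<longlonglongrightarrow> 0"
    by (rule tendsto_sandwich[OF always_eventually always_eventually tendsto_const exp_lim])
       (use Hoeffding in auto)
  then show ?thesis
    using \<open>c > 0\<close> unfolding Y_def by blast
qed

lemma mean_bound_nonneg: "\<mu>L \<ge> 0"
proof -
  have "0 \<le> expectation (L 1)"
    using L_nonneg by (intro integral_nonneg_AE AE_I2) auto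
  then show ?thesis
    using L_expectation_le[of 1] by simp
qed

definition good_block :: "real \<Rightarrow> real \<Rightarrow> nat \<Rightarrow> 'a set" where
  "good_block c K j = {\<omega>\<in>space M. 2^j * c < (\<Sum>k\<in>{2^j..<2^Suc j}. min (X k \<omega>) 1)
                                   \<and> rope_len l0 L (2^Suc j) \<omega> < K * 2^j}"

lemma good_block_events [measurable]: "good_block c K j \<in> events"
  unfolding good_block_def by measurable

lemma good_block_sum_ge:
  assumes "\<omega> \<in> good_block c K j" and "K > 0"
  shows "c / K \<le> (\<Sum>k\<in>{2^j..<2^Suc j}. X k \<omega> / rope_len l0 L k \<omega>)"
  using assms X_pos rope_len_pos L_nonneg
  by (intro sum_ratio_ge[where y="\<lambda>k. min (X k \<omega>) 1" and N="rope_len l0 L (2^Suc j) \<omega>"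
                             and n="2^j"])
     (auto simp: good_block_def intro: less_imp_le rope_len_mono)

lemma eventually_prob_good_block_ge:
  assumes c_lim: "(\<lambda>j. prob {\<omega>\<in>space M. (\<Sum>k\<in>{2^j..<2^Suc j}. min (X k \<omega>) 1) \<le> 2^j * c})
                    \<longlonglongrightarrow> 0"
    and "\<epsilon> > 0" and "K > 0" and K_large: "(l0 + 2 * \<mu>L) / K \<le> \<epsilon> / 2"
  shows "eventually (\<lambda>j. 1 - \<epsilon> \<le> prob (good_block c K j)) sequentially"
  using order_tendstoD(2)[OF c_lim half_gt_zero[OF \<open>\<epsilon> > 0\<close>]]
proof (rule eventually_mono)
  fix j
  define B1 where "B1 = {\<omega>\<in>space M. (\<Sum>k\<in>{2^j..<2^Suc j}. min (X k \<omega>) 1) \<le> 2^j * c}"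
  define B2 where "B2 = {\<omega>\<in>space M. K * 2^j \<le> rope_len l0 L (2^Suc j) \<omega>}"
  assume "prob B1 < \<epsilon> / 2"
  moreover have "prob B2 \<le> \<epsilon> / 2"
    using prob_rope_len_dyadic_ge[OF \<open>K > 0\<close>, of j] K_large unfolding B2_def by linarith
  moreover have "prob (space M - good_block c K j) \<le> prob (B1 \<union> B2)"
    unfolding B1_def B2_def by (intro finite_measure_mono) (auto simp: good_block_def)
  moreover have "prob (B1 \<union> B2) \<le> prob B1 + prob B2"
    unfolding B1_def B2_def by (intro measure_subadditive) measurable
  ultimately show "1 - \<epsilon> \<le> prob (good_block c K j)"
    using prob_compl[OF good_block_events, of c K j] by linarith
qed

lemma large_event_not_summable:
  assumes "\<epsilon> > 0"
  shows "\<exists>A\<in>events. 1 - \<epsilon> \<le> prob A \<and> (\<forall>\<omega>\<in>A. \<not> summable (\<lambda>k. X k \<omega> / rope_len l0 L k \<omega>))"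
proof -
  obtain c where "c > 0" and c_lim:
    "(\<lambda>j. prob {\<omega>\<in>space M. (\<Sum>k\<in>{2^j..<2^Suc j}. min (X k \<omega>) 1) \<le> 2^j * c}) \<longlonglongrightarrow> 0"
    using capped_dyadic_block_sum_large by blast
  define K where "K = 2 * (l0 + 2 * \<mu>L) / \<epsilon>"
  have "K > 0" and K_large: "(l0 + 2 * \<mu>L) / K \<le> \<epsilon> / 2"
    using l0_pos mean_bound_nonneg assms by (simp_all add: K_def field_simps)
  define A where "A = limsup (good_block c K)"
  have "A \<in> events"
    unfolding A_def by measurable
  moreover have "1 - \<epsilon> \<le> prob A"
    unfolding A_def
    by (intro prob_limsup_ge good_block_events eventually_prob_good_block_ge c_lim assms
              \<open>K > 0\<close> K_large)
  moreover have "\<not> summable (\<lambda>k. X k \<omega> / rope_len l0 L k \<omega>)" if "\<omega> \<in> A" for \<omega>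
  proof (rule not_summable_if_frequently_dyadic_block_ge)
    show "c / K > 0"
      using \<open>c > 0\<close> \<open>K > 0\<close> by simp
    show "\<exists>\<^sub>F j in sequentially. c / K \<le> (\<Sum>k\<in>{2^j..<2^Suc j}. X k \<omega> / rope_len l0 L k \<omega>)"
      using that unfolding A_def mem_limsup_iff
      by (rule frequently_elim1) (rule good_block_sum_ge[OF _ \<open>K > 0\<close>])
  qed
  ultimately show ?thesis
    by blast
qed

lemma AE_ant_reaches_end: "AE \<omega> in M. \<exists>i. ant_pos l0 X L i \<omega> + X i \<omega> \<ge> rope_len l0 L i \<omega>"
proof -
  have "AE \<omega> in M. \<not> summable (\<lambda>k. X k \<omega> / rope_len l0 L k \<omega>)"
    by (rule AE_I_events_prob_ge) (rule large_event_not_summable)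
  with AE_space show ?thesis
  proof eventually_elim
    case (elim \<omega>)
    then obtain n where "1 \<le> (\<Sum>k<n. X k \<omega> / rope_len l0 L k \<omega>)"
      using partial_sum_ge_if_not_summable X_pos rope_len_pos
      by (meson less_imp_le divide_nonneg_pos)
    then show ?case
      by (rule ant_reaches_end_if_sum_ge_1[OF rope_len_pos[OF \<open>\<omega> \<in> space M\<close>]])
  qed
qed

end

theorem theorem1:
  fixes M :: "'a measure" and X L :: "nat \<Rightarrow> 'a \<Rightarrow> real" and l0 :: real
  assumes "prob_space M"
    and X_pos: "\<And>i \<omega>. \<omega> \<in> space M \<Longrightarrow> X i \<omega> > 0"
    and X_indep: "prob_space.indep_vars M (\<lambda>_. borel) X UNIV"
    and X_id: "\<And>i. distr M borel (X i) = distr M borel (X 0)"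
    and X_int: "integrable M (X 0)"
    and X_mean: "prob_space.expectation M (X 0) > 0"
    and L_pos: "\<And>i \<omega>. i \<ge> 1 \<Longrightarrow> \<omega> \<in> space M \<Longrightarrow> L i \<omega> > 0"
    and L_indep: "prob_space.indep_vars M (\<lambda>_. borel) L {1..}"
    and L_id: "\<And>i. i \<ge> 1 \<Longrightarrow> distr M borel (L i) = distr M borel (L 1)"
    and L_int: "integrable M (L 1)"
    and l0_pos: "l0 > 0"
  shows "AE \<omega> in M. \<exists>i. ant_pos l0 X L i \<omega> + X i \<omega> \<ge> rope_len l0 L i \<omega>"
proof -
  interpret prob_space M by fact
  have L_measurable: "L i \<in> borel_measurable M" if "i \<ge> 1" for i
    using L_indep that unfolding indep_vars_def by auto
  interpret rubber_rope M X L l0 "expectation (L 1)"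
  proof unfold_locales
    fix i :: nat assume "i \<ge> 1"
    note same_distr = L_measurable[OF \<open>i \<ge> 1\<close>] L_measurable[of 1] L_id[OF \<open>i \<ge> 1\<close>]
    show "integrable M (L i)"
      using integrable_iff_distr_eq[OF same_distr] L_int by simp
    show "expectation (L i) \<le> expectation (L 1)"
      using integral_eq_if_distr_eq[OF same_distr] by simp
  qed (use X_pos X_indep X_id L_pos l0_pos in \<open>auto intro: less_imp_le\<close>)
  show ?thesis
    by (rule AE_ant_reaches_end)
qed

end
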